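(* Let $S$ be a finite simple semigroup satisfying the quasi-identities $$\forall a\,\forall b\,\forall \alpha\,\forall\beta\ \big((a\alpha=a\beta)\to(b\alpha=b\beta)\big),\qquad \forall a\,\forall b\,\forall \alpha\,\forall\beta\ \big((\alpha a=\beta a)\to(\alpha b=\beta b)\big).$$ Then $S$ is a rectangular band of groups.
   Context: A semigroup is simple if its only two-sided ideal is itself. By the Sushkevich–Rees theorem, every finite simple semigroup is isomorphic to some $(G,P,\Lambda,I)$: the set of triples $(\lambda,g,i)$ with $g$ in a finite group $G$, $\lambda\in\Lambda$, $i\in I$ ($\Lambda,I$ finite), with multiplication $(\lambda,g,i)(\mu,h,j)=(\lambda,g\,p_{i\mu}h,j)$, where $P=(p_{i\mu})$ is an $|I|\times|\Lambda|$ matrix over $G$ whose first row and first column consist of $1$. A semigroup is a rectangular band of groups if it is isomorphic to such a $(G,P,\Lambda,I)$ with $p_{i\lambda}=1$ for all $i\in I,\lambda\in\Lambda$. *)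

theory Defs
  imports "HOL-Algebra.Group"
begin

definition is_semigroup :: "'a set \<Rightarrow> ('a \<Rightarrow> 'a \<Rightarrow> 'a) \<Rightarrow> bool" where
  "is_semigroup S smul \<longleftrightarrow>
     (\<forall>x\<in>S. \<forall>y\<in>S. smul x y \<in> S) \<and>
     (\<forall>x\<in>S. \<forall>y\<in>S. \<forall>z\<in>S. smul (smul x y) z = smul x (smul y z))"

definition two_sided_ideal :: "'a set \<Rightarrow> ('a \<Rightarrow> 'a \<Rightarrow> 'a) \<Rightarrow> 'a set \<Rightarrow> bool" where
  "two_sided_ideal S smul J \<longleftrightarrow> J \<subseteq> S \<and> J \<noteq> {} \<and>
     (\<forall>s\<in>S. \<forall>x\<in>J. smul s x \<in> J \<and> smul x s \<in> J)"

definition simple_semigroup :: "'a set \<Rightarrow> ('a \<Rightarrow> 'a \<Rightarrow> 'a) \<Rightarrow> bool" where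
  "simple_semigroup S smul \<longleftrightarrow> is_semigroup S smul \<and>
     (\<forall>J. two_sided_ideal S smul J \<longrightarrow> J = S)"

text \<open>Rectangular band of groups: S is isomorphic to (G,P,Lambda,I) with all p = 1, i.e. the set
  of triples (lambda,g,i) with product (lambda,g,i)(mu,h,j) = (lambda, g h, j).
  Since S is finite, the finite group G and the finite index sets Lambda, I may be taken
  to live in nat.\<close>
definition rectangular_band_of_groups :: "'a set \<Rightarrow> ('a \<Rightarrow> 'a \<Rightarrow> 'a) \<Rightarrow> bool" where
  "rectangular_band_of_groups S smul \<longleftrightarrow>
     (\<exists>(G :: nat monoid) (Lam :: nat set) (I :: nat set) (\<phi> :: nat \<times> nat \<times> nat \<Rightarrow> 'a).
        group G \<and> finite (carrier G) \<and> finite Lam \<and> finite I \<and>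
        bij_betw \<phi> (Lam \<times> carrier G \<times> I) S \<and>
        (\<forall>l\<in>Lam. \<forall>g\<in>carrier G. \<forall>i\<in>I. \<forall>m\<in>Lam. \<forall>h\<in>carrier G. \<forall>j\<in>I.
           smul (\<phi> (l, g, i)) (\<phi> (m, h, j)) = \<phi> (l, g \<otimes>\<^bsub>G\<^esub> h, j)))"

end

theory Submission
  imports Defs "HOL-Algebra.Elementary_Groups"
begin

text \<open>Fix an idempotent \<open>e\<close>, which exists because \<open>S\<close> is finite. The quasi-identities say that
  all left translations of \<open>S\<close> have the same kernel, and likewise all right translations. Hence
  an idempotent \<open>f\<close> with \<open>f e = f\<close> satisfies \<open>b f = b e\<close> for all \<open>b\<close>, an idempotent \<open>f'\<close> with
  \<open>e f' = f'\<close> satisfies \<open>f' b = e b\<close>, so \<open>f' f = e\<close>; and right translations of the finite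
  monoid \<open>eSe\<close> are injective, so \<open>eSe\<close> is a group. Therefore \<open>(f, g, f') \<mapsto> f g f'\<close> multiplies
  as in a rectangular band of groups on \<open>\<Lambda> \<times> eSe \<times> I\<close>, where \<open>\<Lambda>\<close> and \<open>I\<close> are these two sets
  of idempotents. It is inverted by \<open>x \<mapsto> (x h, e x e, h x)\<close> with \<open>h = (e x e)\<inverse>\<close>, and
  simplicity is needed exactly to see that \<open>x h x = x\<close>.\<close>

lemma transport_group_along_bij:
  fixes G :: "'g monoid" and h :: "'b \<Rightarrow> 'g"
  assumes "group G" and h: "bij_betw h A (carrier G)"
  defines "H \<equiv> \<lparr>carrier = A, mult = \<lambda>x y. inv_into A h (h x \<otimes>\<^bsub>G\<^esub> h y),
    one = inv_into A h \<one>\<^bsub>G\<^esub>\<rparr>"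
  shows "group H" and "h \<in> iso H G"
proof -
  interpret G: group G by fact
  have h_closed: "a \<in> A \<Longrightarrow> h a \<in> carrier G" for a
    using h bij_betwE by blast
  have h_inv: "x \<in> carrier G \<Longrightarrow> h (inv_into A h x) = x" for x
    using h by (simp add: bij_betw_def f_inv_into_f)
  have inv_h: "a \<in> A \<Longrightarrow> inv_into A h (h a) = a" for a
    using h by (rule bij_betw_inv_into_left)
  have inv_closed: "x \<in> carrier G \<Longrightarrow> inv_into A h x \<in> A" for x
    using h by (simp add: bij_betw_def inv_into_into)
  show "group H"
  proof (rule groupI)
    fix x assume x: "x \<in> carrier H"
    show "\<exists>y\<in>carrier H. y \<otimes>\<^bsub>H\<^esub> x = \<one>\<^bsub>H\<^esub>"
      by (rule bexI[of _ "inv_into A h (inv\<^bsub>G\<^esub> h x)"])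
        (use x in \<open>simp_all add: H_def h_closed h_inv inv_closed\<close>)
  qed (auto simp: H_def h_closed h_inv inv_closed inv_h G.m_assoc)
  show "h \<in> iso H G"
    using h by (auto simp: iso_def hom_def H_def h_closed h_inv)
qed

lemma finite_group_iso_nat_group:
  fixes G :: "'g monoid"
  assumes "group G" and "finite (carrier G)"
  obtains H :: "nat monoid" and h where "group H" "finite (carrier H)" "h \<in> iso H G"
proof -
  obtain h where h: "bij_betw h {0..<card (carrier G)} (carrier G)"
    using assms(2) ex_bij_betw_nat_finite by blast
  show thesis
    using transport_group_along_bij[OF assms(1) h] that by simp
qed

lemma rectangular_band_of_groupsI:
  fixes G :: "'g monoid" and L :: "'l set" and R :: "'r set" and \<psi> :: "'l \<times> 'g \<times> 'r \<Rightarrow> 'a"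
  assumes "group G" "finite (carrier G)" "finite L" "finite R"
    and bij: "bij_betw \<psi> (L \<times> carrier G \<times> R) S"
    and mult: "\<And>l g i m h j. l \<in> L \<Longrightarrow> g \<in> carrier G \<Longrightarrow> i \<in> R \<Longrightarrow>
      m \<in> L \<Longrightarrow> h \<in> carrier G \<Longrightarrow> j \<in> R \<Longrightarrow>
      smul (\<psi> (l, g, i)) (\<psi> (m, h, j)) = \<psi> (l, g \<otimes>\<^bsub>G\<^esub> h, j)"
  shows "rectangular_band_of_groups S smul"
proof -
  obtain H :: "nat monoid" and hG where H: "group H" "finite (carrier H)" and hG: "hG \<in> iso H G"
    using finite_group_iso_nat_group assms(1,2) by blast
  obtain hL where hL: "bij_betw hL {0..<card L} L"
    using assms(3) ex_bij_betw_nat_finite by blast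
  obtain hR where hR: "bij_betw hR {0..<card R} R"
    using assms(4) ex_bij_betw_nat_finite by blast
  have hG_bij: "bij_betw hG (carrier H) (carrier G)"
    using hG by (simp add: iso_def)
  define \<phi> where "\<phi> = \<psi> \<circ> map_prod hL (map_prod hG hR)"
  have "bij_betw \<phi> ({0..<card L} \<times> carrier H \<times> {0..<card R}) S"
    unfolding \<phi>_def
    by (rule bij_betw_trans[OF bij_betw_map_prod[OF hL bij_betw_map_prod[OF hG_bij hR]] bij])
  moreover have "smul (\<phi> (l, g, i)) (\<phi> (m, h, j)) = \<phi> (l, g \<otimes>\<^bsub>H\<^esub> h, j)"
    if "l \<in> {0..<card L}" "g \<in> carrier H" "i \<in> {0..<card R}"
      "m \<in> {0..<card L}" "h \<in> carrier H" "j \<in> {0..<card R}" for l g i m h j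
  proof -
    have "hG (g \<otimes>\<^bsub>H\<^esub> h) = hG g \<otimes>\<^bsub>G\<^esub> hG h"
      using hG that by (simp add: iso_def hom_def)
    then show ?thesis
      using that mult bij_betwE[OF hL] bij_betwE[OF hR] bij_betwE[OF hG_bij] by (simp add: \<phi>_def)
  qed
  ultimately show ?thesis
    unfolding rectangular_band_of_groups_def using H
    by (intro exI[of _ H] exI[of _ "{0..<card L}"] exI[of _ "{0..<card R}"] exI[of _ \<phi>]) simp
qed

lemma rectangular_band_of_groups_empty: "rectangular_band_of_groups {} smul"
  by (rule rectangular_band_of_groupsI[of "singleton_group 0" "{}" "{}" "\<lambda>_. undefined"])
    (simp_all add: bij_betw_def)

locale semigroup_on =
  fixes S :: "'a set" and smul :: "'a \<Rightarrow> 'a \<Rightarrow> 'a" (infixl \<open>\<cdot>\<close> 70)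
  assumes closed [intro, simp]: "x \<in> S \<Longrightarrow> y \<in> S \<Longrightarrow> x \<cdot> y \<in> S"
    and assoc: "x \<in> S \<Longrightarrow> y \<in> S \<Longrightarrow> z \<in> S \<Longrightarrow> x \<cdot> y \<cdot> z = x \<cdot> (y \<cdot> z)"

lemma semigroup_onI: "is_semigroup S smul \<Longrightarrow> semigroup_on S smul"
  by (simp add: is_semigroup_def semigroup_on_def)

context semigroup_on
begin

text \<open>\<^term>\<open>spow x n\<close> is the power \<open>x\<^sup>n\<^sup>+\<^sup>1\<close>; a semigroup has no \<open>x\<^sup>0\<close>.\<close>
primrec spow :: "'a \<Rightarrow> nat \<Rightarrow> 'a" where
  "spow x 0 = x"
| "spow x (Suc n) = x \<cdot> spow x n"

lemma spow_closed [simp]: "x \<in> S \<Longrightarrow> spow x n \<in> S"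
  by (induction n) simp_all

lemma spow_add: "x \<in> S \<Longrightarrow> spow x i \<cdot> spow x j = spow x (i + j + 1)"
  by (induction i) (simp_all add: assoc)

lemma spow_eventually_periodic:
  assumes "finite S" "x \<in> S"
  obtains p m where "0 < p" "\<And>k c. m \<le> k \<Longrightarrow> spow x (k + c * p) = spow x k"
proof -
  have "\<not> inj (spow x)"
  proof
    assume "inj (spow x)"
    moreover have "finite (range (spow x))"
      by (rule finite_subset[OF _ assms(1)]) (use assms(2) in auto)
    ultimately have "finite (UNIV :: nat set)"
      by (metis finite_imageD)
    then show False
      by simp
  qed
  then obtain i j where "i \<noteq> j" "spow x i = spow x j"
    unfolding inj_def by blast
  define m n where "m = min i j" and "n = max i j"
  have "m < n" and repeat: "spow x m = spow x n"
    using \<open>i \<noteq> j\<close> \<open>spow x i = spow x j\<close> by (auto simp: m_def n_def min_def max_def)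
  define p where "p = n - m"
  have shift: "spow x (k + p) = spow x k" if "m \<le> k" for k
    using that by (induction k rule: dec_induct) (use \<open>m < n\<close> repeat in \<open>simp_all add: p_def\<close>)
  show thesis
  proof
    show "0 < p"
      using \<open>m < n\<close> by (simp add: p_def)
    show "spow x (k + c * p) = spow x k" if "m \<le> k" for k c
    proof (induction c)
      case (Suc c)
      have "spow x (k + Suc c * p) = spow x (k + c * p + p)"
        by (simp add: algebra_simps)
      also have "\<dots> = spow x k"
        using shift[of "k + c * p"] Suc.IH that by simp
      finally show ?case .
    qed simp
  qed
qed

lemma idempotent_exists:
  assumes "finite S" "S \<noteq> {}"
  obtains e where "e \<in> S" "e \<cdot> e = e"
proof -
  obtain x where x: "x \<in> S"
    using assms(2) by blast
  obtain p m where "0 < p" and periodic: "\<And>k c. m \<le> k \<Longrightarrow> spow x (k + c * p) = spow x k"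
    using spow_eventually_periodic[OF assms(1) x] by metis
  define k where "k = (m + 1) * p - 1"
  have "(m + 1) * 1 \<le> (m + 1) * p"
    using \<open>0 < p\<close> by (intro mult_le_mono2) simp
  then have "m \<le> k" and k_double: "k + k + 1 = k + (m + 1) * p"
    by (simp_all add: k_def)
  have "spow x k \<cdot> spow x k = spow x (k + (m + 1) * p)"
    using spow_add[OF x, of k k] unfolding k_double .
  also have "\<dots> = spow x k"
    using periodic \<open>m \<le> k\<close> .
  finally show thesis
    by (rule that[OF spow_closed[OF x]])
qed

lemma two_sided_ideal_sandwich:
  assumes "e \<in> S"
  shows "two_sided_ideal S (\<cdot>) {s \<cdot> e \<cdot> t | s t. s \<in> S \<and> t \<in> S}"
  unfolding two_sided_ideal_def
proof (intro conjI ballI)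
  show "{s \<cdot> e \<cdot> t | s t. s \<in> S \<and> t \<in> S} \<subseteq> S"
    using assms by auto
  show "{s \<cdot> e \<cdot> t | s t. s \<in> S \<and> t \<in> S} \<noteq> {}"
    using assms by auto
  fix u y assume u: "u \<in> S" and "y \<in> {s \<cdot> e \<cdot> t | s t. s \<in> S \<and> t \<in> S}"
  then obtain s t where st: "s \<in> S" "t \<in> S" "y = s \<cdot> e \<cdot> t"
    by blast
  have "u \<cdot> y = (u \<cdot> s) \<cdot> e \<cdot> t" "y \<cdot> u = s \<cdot> e \<cdot> (t \<cdot> u)"
    using u st assms by (simp_all add: assoc)
  then show "u \<cdot> y \<in> {s \<cdot> e \<cdot> t | s t. s \<in> S \<and> t \<in> S}"
    and "y \<cdot> u \<in> {s \<cdot> e \<cdot> t | s t. s \<in> S \<and> t \<in> S}"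
    using u st by blast+
qed

lemma simple_semigroup_sandwich:
  assumes "simple_semigroup S (\<cdot>)" "e \<in> S" "x \<in> S"
  obtains s t where "s \<in> S" "t \<in> S" "x = s \<cdot> e \<cdot> t"
  using assms two_sided_ideal_sandwich[OF assms(2)] unfolding simple_semigroup_def by blast

end

locale uniform_translation_semigroup = semigroup_on +
  fixes e :: 'a
  assumes finite: "finite S"
    and idem_closed [simp]: "e \<in> S" and idem [simp]: "e \<cdot> e = e"
    and left_uniform: "a \<in> S \<Longrightarrow> b \<in> S \<Longrightarrow> x \<in> S \<Longrightarrow> y \<in> S \<Longrightarrow> a \<cdot> x = a \<cdot> y \<Longrightarrow> b \<cdot> x = b \<cdot> y"
    and right_uniform: "a \<in> S \<Longrightarrow> b \<in> S \<Longrightarrow> x \<in> S \<Longrightarrow> y \<in> S \<Longrightarrow> x \<cdot> a = y \<cdot> a \<Longrightarrow> x \<cdot> b = y \<cdot> b"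
begin

definition eSe :: "'a set" where
  "eSe = {x \<in> S. e \<cdot> x = x \<and> x \<cdot> e = x}"

definition Se_idempotents :: "'a set" where
  "Se_idempotents = {f \<in> S. f \<cdot> f = f \<and> f \<cdot> e = f}"

definition eS_idempotents :: "'a set" where
  "eS_idempotents = {f \<in> S. f \<cdot> f = f \<and> e \<cdot> f = f}"

definition local_group :: "'a monoid" where
  "local_group = \<lparr>carrier = eSe, mult = (\<cdot>), one = e\<rparr>"

lemma local_group_simps [simp]:
  "carrier local_group = eSe" "x \<otimes>\<^bsub>local_group\<^esub> y = x \<cdot> y" "\<one>\<^bsub>local_group\<^esub> = e"
  by (simp_all add: local_group_def)

abbreviation local_inv :: "'a \<Rightarrow> 'a" where
  "local_inv \<equiv> m_inv local_group"

definition sandwich :: "'a \<times> 'a \<times> 'a \<Rightarrow> 'a" where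
  "sandwich = (\<lambda>(f, g, f'). f \<cdot> g \<cdot> f')"

definition components :: "'a \<Rightarrow> 'a \<times> 'a \<times> 'a" where
  "components x = (x \<cdot> local_inv (e \<cdot> x \<cdot> e), e \<cdot> x \<cdot> e, local_inv (e \<cdot> x \<cdot> e) \<cdot> x)"

lemma idem_left [simp]: "x \<in> S \<Longrightarrow> e \<cdot> (e \<cdot> x) = e \<cdot> x"
  by (simp flip: assoc)

lemma eSe_closed [simp]: "x \<in> S \<Longrightarrow> e \<cdot> x \<cdot> e \<in> eSe"
  by (simp add: eSe_def assoc)

lemma eSe_D [simp]:
  assumes "g \<in> eSe"
  shows "g \<in> S" "e \<cdot> g = g" "g \<cdot> e = g"
  using assms by (simp_all add: eSe_def)

lemma eSe_left_absorb [simp]: "g \<in> eSe \<Longrightarrow> y \<in> S \<Longrightarrow> e \<cdot> (g \<cdot> y) = g \<cdot> y"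
  by (simp flip: assoc)

lemma eSe_right_absorb [simp]: "g \<in> eSe \<Longrightarrow> y \<in> S \<Longrightarrow> g \<cdot> (e \<cdot> y) = g \<cdot> y"
  by (simp flip: assoc)

lemma idem_in_eSe [simp]: "e \<in> eSe"
  unfolding eSe_def by simp

lemma finite_eSe: "finite eSe"
  unfolding eSe_def using finite by simp

lemma eSe_mult_closed:
  assumes "g \<in> eSe" "h \<in> eSe"
  shows "g \<cdot> h \<in> eSe"
proof -
  have "g \<cdot> h \<in> S" "e \<cdot> (g \<cdot> h) = g \<cdot> h" "g \<cdot> h \<cdot> e = g \<cdot> h"
    using assms by (simp_all add: assoc)
  then show ?thesis
    unfolding eSe_def by simp
qed

lemma group_local_group: "group local_group"
proof (rule groupI)
  fix g assume "g \<in> carrier local_group"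
  then have g: "g \<in> eSe"
    by simp
  have "(\<lambda>x. x \<cdot> g) ` eSe = eSe"
  proof (rule endo_inj_surj)
    show "finite eSe"
      by (rule finite_eSe)
    show "(\<lambda>x. x \<cdot> g) ` eSe \<subseteq> eSe"
      using g eSe_mult_closed by blast
    show "inj_on (\<lambda>x. x \<cdot> g) eSe"
    proof (rule inj_onI)
      fix x y assume "x \<in> eSe" "y \<in> eSe" "x \<cdot> g = y \<cdot> g"
      then have "x \<cdot> e = y \<cdot> e"
        using right_uniform[of g e x y] g by simp
      then show "x = y"
        using \<open>x \<in> eSe\<close> \<open>y \<in> eSe\<close> by simp
    qed
  qed
  moreover have "e \<in> eSe"
    by simp
  ultimately obtain y where "y \<in> eSe" "y \<cdot> g = e"
    by (metis imageE)
  then show "\<exists>y\<in>carrier local_group. y \<otimes>\<^bsub>local_group\<^esub> g = \<one>\<^bsub>local_group\<^esub>"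
    by (intro bexI[of _ y]) simp_all
next
  fix x y z assume "x \<in> carrier local_group" "y \<in> carrier local_group" "z \<in> carrier local_group"
  then show "x \<otimes>\<^bsub>local_group\<^esub> y \<otimes>\<^bsub>local_group\<^esub> z = x \<otimes>\<^bsub>local_group\<^esub> (y \<otimes>\<^bsub>local_group\<^esub> z)"
    by (simp add: assoc)
qed (simp_all add: eSe_mult_closed)

lemma local_inv_closed [simp]: "g \<in> eSe \<Longrightarrow> local_inv g \<in> eSe"
  using group.inv_closed[OF group_local_group] by simp

lemma local_inv_left [simp]: "g \<in> eSe \<Longrightarrow> local_inv g \<cdot> g = e"
  using group.l_inv[OF group_local_group] by simp

lemma local_inv_right [simp]: "g \<in> eSe \<Longrightarrow> g \<cdot> local_inv g = e"
  using group.r_inv[OF group_local_group] by simp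

lemma local_inv_mult:
  "g \<in> eSe \<Longrightarrow> h \<in> eSe \<Longrightarrow> local_inv (g \<cdot> h) = local_inv h \<cdot> local_inv g"
  using group.inv_mult_group[OF group_local_group] by simp

lemma mult_Se_idempotent: "f \<in> Se_idempotents \<Longrightarrow> b \<in> S \<Longrightarrow> b \<cdot> f = b \<cdot> e"
  using left_uniform[of f b f e] by (simp add: Se_idempotents_def)

lemma eS_idempotent_mult: "f \<in> eS_idempotents \<Longrightarrow> b \<in> S \<Longrightarrow> f \<cdot> b = e \<cdot> b"
  using right_uniform[of f b f e] by (simp add: eS_idempotents_def)

lemma eS_Se_idempotents_mult:
  assumes "f' \<in> eS_idempotents" "f \<in> Se_idempotents"
  shows "f' \<cdot> f = e"
proof -
  have "f' \<cdot> f = e \<cdot> f"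
    using eS_idempotent_mult[OF assms(1)] assms(2) by (simp add: Se_idempotents_def)
  also have "\<dots> = e"
    using mult_Se_idempotent[OF assms(2)] by simp
  finally show ?thesis .
qed

lemma sandwich_mult:
  assumes "f \<in> Se_idempotents" "g \<in> eSe" "f' \<in> eS_idempotents"
    and "m \<in> Se_idempotents" "h \<in> eSe" "j \<in> eS_idempotents"
  shows "sandwich (f, g, f') \<cdot> sandwich (m, h, j) = sandwich (f, g \<cdot> h, j)"
proof -
  have S: "f \<in> S" "f' \<in> S" "m \<in> S" "j \<in> S"
    using assms by (simp_all add: Se_idempotents_def eS_idempotents_def)
  have "sandwich (f, g, f') \<cdot> sandwich (m, h, j) = f \<cdot> g \<cdot> (f' \<cdot> m) \<cdot> h \<cdot> j"
    using S assms(2,5) by (simp add: sandwich_def assoc)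
  also have "\<dots> = f \<cdot> (g \<cdot> e) \<cdot> h \<cdot> j"
    using S assms(2,5) by (simp add: eS_Se_idempotents_mult[OF assms(3,4)] assoc)
  also have "\<dots> = sandwich (f, g \<cdot> h, j)"
    using S assms(2,5) by (simp add: sandwich_def assoc)
  finally show ?thesis .
qed

lemma local_inv_absorbs:
  assumes "x \<in> S"
  shows "local_inv (e \<cdot> x \<cdot> e) \<cdot> x \<cdot> local_inv (e \<cdot> x \<cdot> e) = local_inv (e \<cdot> x \<cdot> e)"
proof -
  define h where "h = local_inv (e \<cdot> x \<cdot> e)"
  have h: "h \<in> eSe"
    using assms by (simp add: h_def)
  have "h \<cdot> x \<cdot> h = h \<cdot> (e \<cdot> x \<cdot> e) \<cdot> h"
    using assms h by (simp add: assoc)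
  also have "\<dots> = h"
    using assms h by (simp add: h_def)
  finally show ?thesis
    by (simp add: h_def)
qed

lemma components_closed:
  assumes "x \<in> S"
  shows "components x \<in> Se_idempotents \<times> eSe \<times> eS_idempotents"
proof -
  define h where "h = local_inv (e \<cdot> x \<cdot> e)"
  have h: "h \<in> eSe" and absorb: "h \<cdot> x \<cdot> h = h"
    using assms local_inv_absorbs by (simp_all add: h_def)
  have "x \<cdot> h \<cdot> (x \<cdot> h) = x \<cdot> (h \<cdot> x \<cdot> h)" "x \<cdot> h \<cdot> e = x \<cdot> (h \<cdot> e)"
    using assms h by (simp_all add: assoc)
  then have "x \<cdot> h \<in> Se_idempotents"
    using assms h absorb by (simp add: Se_idempotents_def)
  moreover have "h \<cdot> x \<cdot> (h \<cdot> x) = h \<cdot> x \<cdot> h \<cdot> x" "e \<cdot> (h \<cdot> x) = e \<cdot> h \<cdot> x"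
    using assms h by (simp_all add: assoc)
  then have "h \<cdot> x \<in> eS_idempotents"
    using assms h absorb by (simp add: eS_idempotents_def)
  ultimately show ?thesis
    using assms by (simp add: components_def h_def)
qed

lemma components_sandwich:
  assumes "f \<in> Se_idempotents" "g \<in> eSe" "f' \<in> eS_idempotents"
  shows "components (sandwich (f, g, f')) = (f, g, f')"
proof -
  have S: "f \<in> S" "f' \<in> S"
    using assms by (simp_all add: Se_idempotents_def eS_idempotents_def)
  have ef: "e \<cdot> f = e" and fe: "f' \<cdot> e = e"
    using mult_Se_idempotent[OF assms(1), of e] eS_idempotent_mult[OF assms(3), of e] by simp_all
  have core: "e \<cdot> sandwich (f, g, f') \<cdot> e = g"
  proof -
    have "e \<cdot> sandwich (f, g, f') \<cdot> e = (e \<cdot> f) \<cdot> g \<cdot> (f' \<cdot> e)"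
      using S assms(2) by (simp add: sandwich_def assoc)
    then show ?thesis
      using ef fe assms(2) by simp
  qed
  define h where "h = local_inv g"
  have h: "h \<in> eSe" "h \<cdot> g = e" "g \<cdot> h = e"
    using assms(2) by (simp_all add: h_def)
  have "sandwich (f, g, f') \<cdot> h = f \<cdot> (g \<cdot> (f' \<cdot> h))"
    using S assms(2) h by (simp add: sandwich_def assoc)
  also have "\<dots> = f"
    using eS_idempotent_mult[OF assms(3)] S assms(1,2) h by (simp add: Se_idempotents_def)
  finally have left: "sandwich (f, g, f') \<cdot> h = f" .
  have "h \<cdot> sandwich (f, g, f') = (h \<cdot> f) \<cdot> g \<cdot> f'"
    using S assms(2) h by (simp add: sandwich_def assoc)
  also have "\<dots> = f'"
    using mult_Se_idempotent[OF assms(1)] S assms(2,3) h by (simp add: eS_idempotents_def)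
  finally have right: "h \<cdot> sandwich (f, g, f') = f'" .
  show ?thesis
    using core left right by (simp add: components_def h_def)
qed

text \<open>This is where simplicity enters: writing \<open>x = s e t\<close> with \<open>h = (e x e)\<inverse>\<close>, the
  middle factor \<open>e t h s e\<close> of \<open>x h x\<close> is the identity of the local group.\<close>
lemma regular_local_inv:
  assumes "simple_semigroup S (\<cdot>)" "x \<in> S"
  shows "x \<cdot> local_inv (e \<cdot> x \<cdot> e) \<cdot> x = x"
proof -
  obtain s t where st: "s \<in> S" "t \<in> S" and x: "x = s \<cdot> e \<cdot> t"
    using simple_semigroup_sandwich[OF assms(1) idem_closed assms(2)] .
  define a b where "a = e \<cdot> s \<cdot> e" and "b = e \<cdot> t \<cdot> e"
  have ab: "a \<in> eSe" "b \<in> eSe"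
    using st by (simp_all add: a_def b_def)
  have g: "e \<cdot> x \<cdot> e = a \<cdot> b"
    using st by (simp add: x a_def b_def assoc)
  define h where "h = local_inv (a \<cdot> b)"
  have h: "h \<in> eSe" "h = local_inv b \<cdot> local_inv a"
    using ab by (simp_all add: h_def local_inv_mult eSe_mult_closed)
  have "e \<cdot> t \<cdot> h \<cdot> s \<cdot> e = b \<cdot> h \<cdot> a"
    using st h(1) by (simp add: a_def b_def assoc)
  also have "\<dots> = (b \<cdot> local_inv b) \<cdot> (local_inv a \<cdot> a)"
    using ab by (simp add: h(2) assoc)
  also have "\<dots> = e"
    using ab by simp
  finally have middle: "e \<cdot> t \<cdot> h \<cdot> s \<cdot> e = e" .
  have "x \<cdot> h \<cdot> x = s \<cdot> (e \<cdot> t \<cdot> h \<cdot> s \<cdot> e) \<cdot> t"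
    using st h(1) by (simp add: x assoc)
  then have "x \<cdot> h \<cdot> x = x"
    using st by (simp add: middle x)
  then show ?thesis
    unfolding g h_def .
qed

lemma sandwich_components:
  assumes "simple_semigroup S (\<cdot>)" "x \<in> S"
  shows "sandwich (components x) = x"
proof -
  define h where "h = local_inv (e \<cdot> x \<cdot> e)"
  have h: "h \<in> eSe" "h \<cdot> (e \<cdot> x \<cdot> e) = e"
    using assms(2) by (simp_all add: h_def)
  have "sandwich (components x) = x \<cdot> (h \<cdot> (e \<cdot> x \<cdot> e)) \<cdot> h \<cdot> x"
    using assms(2) h(1) by (simp add: sandwich_def components_def h_def assoc)
  also have "\<dots> = x \<cdot> h \<cdot> x"
    using assms(2) h by (simp add: assoc)
  also have "\<dots> = x"
    using regular_local_inv[OF assms] by (simp add: h_def)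
  finally show ?thesis .
qed

lemma bij_betw_sandwich:
  assumes "simple_semigroup S (\<cdot>)"
  shows "bij_betw sandwich (Se_idempotents \<times> eSe \<times> eS_idempotents) S"
proof (rule bij_betw_byWitness[where f' = components])
  show "\<forall>a\<in>Se_idempotents \<times> eSe \<times> eS_idempotents. components (sandwich a) = a"
    using components_sandwich by auto
  show "\<forall>x\<in>S. sandwich (components x) = x"
    using sandwich_components assms by blast
  show "sandwich ` (Se_idempotents \<times> eSe \<times> eS_idempotents) \<subseteq> S"
    by (auto simp: sandwich_def Se_idempotents_def eS_idempotents_def)
  show "components ` S \<subseteq> Se_idempotents \<times> eSe \<times> eS_idempotents"
    using components_closed by blast
qed

end

theorem lemma2:
  fixes S :: "'a set" and smul :: "'a \<Rightarrow> 'a \<Rightarrow> 'a"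
  assumes "finite S"
    and "simple_semigroup S smul"
    and "\<forall>a\<in>S. \<forall>b\<in>S. \<forall>\<alpha>\<in>S. \<forall>\<beta>\<in>S. smul a \<alpha> = smul a \<beta> \<longrightarrow> smul b \<alpha> = smul b \<beta>"
    and "\<forall>a\<in>S. \<forall>b\<in>S. \<forall>\<alpha>\<in>S. \<forall>\<beta>\<in>S. smul \<alpha> a = smul \<beta> a \<longrightarrow> smul \<alpha> b = smul \<beta> b"
  shows "rectangular_band_of_groups S smul"
proof (cases "S = {}")
  case True
  then show ?thesis
    by (simp add: rectangular_band_of_groups_empty)
next
  case False
  interpret semigroup_on S smul
    using assms(2) by (simp add: simple_semigroup_def semigroup_onI)
  obtain e where "e \<in> S" "smul e e = e"
    using idempotent_exists[OF assms(1) False] .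
  then interpret uniform_translation_semigroup S smul e
    by unfold_locales (use assms(1,3,4) in blast)+
  show ?thesis
  proof (rule rectangular_band_of_groupsI[OF group_local_group])
    show "finite (carrier local_group)" "finite Se_idempotents" "finite eS_idempotents"
      unfolding Se_idempotents_def eS_idempotents_def
      using finite finite_eSe by simp_all
    show "bij_betw sandwich (Se_idempotents \<times> carrier local_group \<times> eS_idempotents) S"
      using bij_betw_sandwich[OF assms(2)] by simp
  qed (simp add: sandwich_mult)
qed

end
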